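(* Let $G$ be a simple graph with $m$ edges and $t$ triangles, let $\epsilon\in(0,1)$, let $\widetilde{\alpha}$ be a positive integer and $\widetilde{t}>0$. Set $\gamma=\max\{\widetilde{\alpha},\widetilde{t}^{1/3}\}$, $\tau_d=\frac{8m\gamma^2}{\epsilon\widetilde{t}}$ and $\tau_t=12\gamma/\epsilon$. Let $H_d=\{e\in E: d(e)>\tau_d\}$ and $H_t=\{e\in E: t(e)>\tau_t\}$. If $\widetilde{\alpha}>\alpha(G)$ and $\widetilde{t}\in[t/4,t]$, then $|H_d|\le(\epsilon\widetilde{t})^{2/3}$ and $|H_t|\le(\epsilon\widetilde{t})^{2/3}$.
   Context: For an edge $e=\{u,v\}$, its degree is $d(e)=\min\{d(u),d(v)\}$, and $t(e)$ is the number of triangles of $G$ containing $e$. The arboricity $\alpha(G)$ is the minimum number of forests needed to cover the edge set of $G$. *)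

theory Defs
  imports Complex_Main
begin

text \<open>A finite simple graph is given by its edge set E: a finite set of
  two-element vertex sets. (Isolated vertices do not affect any quantity here.)\<close>
definition simple_graph :: "'a set set \<Rightarrow> bool" where
  "simple_graph E \<longleftrightarrow> finite E \<and> (\<forall>e\<in>E. \<exists>u v. u \<noteq> v \<and> e = {u, v})"

definition vdeg :: "'a set set \<Rightarrow> 'a \<Rightarrow> nat" where
  "vdeg E v = card {e \<in> E. v \<in> e}"

definition edeg :: "'a set set \<Rightarrow> 'a set \<Rightarrow> nat" where
  "edeg E e = Min (vdeg E ` e)"

definition triangles :: "'a set set \<Rightarrow> 'a set set" where
  "triangles E = {T. card T = 3 \<and> (\<forall>x\<in>T. \<forall>y\<in>T. x \<noteq> y \<longrightarrow> {x, y} \<in> E)}"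

definition etri :: "'a set set \<Rightarrow> 'a set \<Rightarrow> nat" where
  "etri E e = card {T \<in> triangles E. e \<subseteq> T}"

definition has_cycle :: "'a set set \<Rightarrow> bool" where
  "has_cycle F \<longleftrightarrow> (\<exists>vs. length vs \<ge> 3 \<and> distinct vs \<and>
      (\<forall>i < length vs. {vs ! i, vs ! ((i + 1) mod length vs)} \<in> F))"

definition forest :: "'a set set \<Rightarrow> bool" where
  "forest F \<longleftrightarrow> \<not> has_cycle F"

definition arboricity :: "'a set set \<Rightarrow> nat" where
  "arboricity E = (LEAST k. \<exists>Fs :: nat \<Rightarrow> 'a set set.
      (\<forall>i<k. forest (Fs i) \<and> Fs i \<subseteq> E) \<and> E = (\<Union>i<k. Fs i))"

end

theory Submission
  imports Defs
begin

text \<open>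
  Let t' be the triangle estimate. An edge of degree above \<open>\<tau>\<close> has both endpoints
  among the vertices of degree above \<open>\<tau>\<close>; by the handshake lemma there are at most
  \<open>2m/\<tau>\<close> of them, and a graph of arboricity \<open>\<alpha>\<close> on \<open>s\<close> vertices has at most
  \<open>\<alpha> s\<close> edges, since a forest has no more edges than vertices (a longest path shows
  that a graph of minimum degree two has a cycle). Hence \<open>|H\<^sub>d| \<le> 2\<alpha>m/\<tau>\<^sub>d \<le> \<epsilon>t'/\<gamma>\<close>.
  Double counting gives \<open>\<Sum>\<^sub>e t(e) = 3t \<le> 12t'\<close>, so \<open>|H\<^sub>t| \<le> 12t'/\<tau>\<^sub>t = \<epsilon>t'/\<gamma>\<close>.
  Finally \<open>\<gamma>\<^sup>3 \<ge> t'\<close> and \<open>\<epsilon> < 1\<close> give \<open>\<epsilon>t'/\<gamma> \<le> \<epsilon> t'\<^sup>2\<^sup>/\<^sup>3 \<le> (\<epsilon>t')\<^sup>2\<^sup>/\<^sup>3\<close>.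
\<close>

definition is_path :: "'a set set \<Rightarrow> 'a list \<Rightarrow> bool" where
  "is_path F p \<longleftrightarrow> distinct p \<and> (\<forall>i. Suc i < length p \<longrightarrow> {p ! i, p ! Suc i} \<in> F)"

lemma is_path_Cons:
  "is_path F (y # p) \<longleftrightarrow> y \<notin> set p \<and> is_path F p \<and> (p \<noteq> [] \<longrightarrow> {y, hd p} \<in> F)"
  unfolding is_path_def
  by (cases p) (auto simp: nth_Cons split: nat.split)

lemma is_path_chord_has_cycle:
  assumes "is_path F p" "2 \<le> j" "j < length p" "{p ! j, p ! 0} \<in> F"
  shows "has_cycle F"
  unfolding has_cycle_def
proof (intro exI conjI allI impI)
  let ?vs = "take (Suc j) p"
  show "3 \<le> length ?vs" "distinct ?vs"
    using assms(1-3) by (auto simp: is_path_def)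
  fix i assume "i < length ?vs"
  then have "i < j \<or> i = j" using assms(3) by auto
  then show "{?vs ! i, ?vs ! ((i + 1) mod length ?vs)} \<in> F"
  proof
    assume "i < j"
    then show ?thesis using assms(1,3) by (simp add: is_path_def)
  next
    assume "i = j"
    then show ?thesis using assms(3,4) by simp
  qed
qed

lemma ex_longest_path:
  assumes "finite V" "v \<in> V"
  obtains p where "p \<noteq> []" "set p \<subseteq> V" "is_path F p"
    "\<And>q. set q \<subseteq> V \<Longrightarrow> is_path F q \<Longrightarrow> length q \<le> length p"
proof -
  define P where "P n \<longleftrightarrow> (\<exists>p. set p \<subseteq> V \<and> is_path F p \<and> length p = n)" for n
  have "P 1"
    unfolding P_def using assms by (intro exI[of _ "[v]"]) (simp add: is_path_def)
  moreover have "\<forall>n. P n \<longrightarrow> n \<le> card V"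
  proof (intro allI impI)
    fix n assume "P n"
    then obtain p where "set p \<subseteq> V" "distinct p" "length p = n"
      unfolding P_def is_path_def by blast
    then show "n \<le> card V"
      using assms(1) by (metis card_mono distinct_card)
  qed
  ultimately have "\<exists>n. P n \<and> (\<forall>k. P k \<longrightarrow> k \<le> n)"
    by (rule Nat.ex_has_greatest_nat)
  then obtain n where n: "P n" "\<forall>k. P k \<longrightarrow> k \<le> n"
    by (elim exE conjE)
  then obtain p where p: "set p \<subseteq> V" "is_path F p" "length p = n"
    unfolding P_def by blast
  show thesis
  proof (rule that[OF _ p(1,2)])
    show "p \<noteq> []"
      using n(2)[rule_format, OF \<open>P 1\<close>] p(3) by auto
    show "length q \<le> length p" if "set q \<subseteq> V" "is_path F q" for q
      using n(2) that p(3) unfolding P_def by blast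
  qed
qed

lemma edge_other_end:
  assumes "\<exists>u v. u \<noteq> v \<and> e = {u, v}" "x \<in> e"
  obtains y where "e = {y, x}" "y \<noteq> x"
  using assms by (auto simp: insert_commute)

lemma min_degree_two_has_cycle:
  assumes "finite V" "V \<noteq> {}" "\<Union>F \<subseteq> V"
    and edges: "\<forall>e\<in>F. \<exists>u v. u \<noteq> v \<and> e = {u, v}"
    and deg: "\<forall>v\<in>V. 2 \<le> card {e \<in> F. v \<in> e}"
  shows "has_cycle F"
proof (rule ccontr)
  assume acyclic: "\<not> has_cycle F"
  obtain v where "v \<in> V" using assms(2) by blast
  then obtain p where p: "p \<noteq> []" "set p \<subseteq> V" "is_path F p"
    and longest: "\<And>q. set q \<subseteq> V \<Longrightarrow> is_path F q \<Longrightarrow> length q \<le> length p"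
    using ex_longest_path[OF assms(1)] by blast
  define x where "x = hd p"
  \<comment> \<open>By maximality every neighbour of \<open>x\<close> lies on \<open>p\<close>;
    one beyond \<open>p ! 1\<close> would close a cycle.\<close>
  have "e = {p ! 1, x}" if e: "e \<in> F" "x \<in> e" for e
  proof -
    obtain y where y: "e = {y, x}" "y \<noteq> x"
      using edges e by (metis edge_other_end)
    have "y \<in> set p"
    proof (rule ccontr)
      assume "y \<notin> set p"
      then have "is_path F (y # p)"
        using p(1,3) e(1) y(1) by (simp add: is_path_Cons x_def)
      moreover have "set (y # p) \<subseteq> V"
        using p(2) e(1) y(1) assms(3) by auto
      ultimately show False
        using longest[of "y # p"] by simp
    qed
    then obtain j where j: "j < length p" "p ! j = y"
      by (metis in_set_conv_nth)
    have "j \<noteq> 0"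
      using j(2) y(2) p(1) by (metis hd_conv_nth x_def)
    moreover have "\<not> 2 \<le> j"
      using is_path_chord_has_cycle[OF p(3) _ j(1)] j(2) y(1) e(1) acyclic p(1)
      by (auto simp: x_def hd_conv_nth)
    ultimately have "j = 1" by simp
    then show ?thesis using j(2) y(1) by simp
  qed
  then have "card {e \<in> F. x \<in> e} \<le> card {{p ! 1, x}}"
    by (intro card_mono) auto
  moreover have "x \<in> V" using p(1,2) x_def by auto
  ultimately show False using deg by fastforce
qed

lemma has_cycle_mono: "has_cycle F \<Longrightarrow> F \<subseteq> G \<Longrightarrow> has_cycle G"
  unfolding has_cycle_def by blast

lemma card_acyclic_le_card_vertices:
  assumes "finite V" "\<Union>F \<subseteq> V"
    and "\<forall>e\<in>F. \<exists>u v. u \<noteq> v \<and> e = {u, v}" "\<not> has_cycle F"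
  shows "card F \<le> card V"
  using assms
proof (induction V arbitrary: F rule: finite_remove_induct)
  case empty
  then have "F = {}" by fast
  then show ?case by simp
next
  case (remove V)
  have "\<not> (\<forall>v\<in>V. 2 \<le> card {e \<in> F. v \<in> e})"
    using min_degree_two_has_cycle[of V F] remove.hyps(1,2) remove.prems by blast
  then obtain v where v: "v \<in> V" "card {e \<in> F. v \<in> e} < 2"
    by (auto simp: not_le)
  let ?F' = "F - {e \<in> F. v \<in> e}"
  have "card ?F' \<le> card (V - {v})"
  proof (rule remove.IH[OF v(1)])
    show "\<not> has_cycle ?F'"
      using remove.prems(3) has_cycle_mono by blast
  qed (use remove.prems in auto)
  moreover have "F = ?F' \<union> {e \<in> F. v \<in> e}" by blast
  then have "card F \<le> card ?F' + card {e \<in> F. v \<in> e}"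
    by (metis card_Un_le)
  moreover have "card (V - {v}) = card V - 1" "0 < card V"
    using v(1) remove.hyps(1) by (auto simp: card_gt_0_iff)
  ultimately show ?case
    using v(2) by linarith
qed

lemma has_cycle_two_edges:
  assumes "has_cycle F"
  obtains e e' where "e \<in> F" "e' \<in> F" "e \<noteq> e'"
proof -
  obtain vs where vs: "3 \<le> length vs" "distinct vs"
    "\<forall>i < length vs. {vs ! i, vs ! ((i + 1) mod length vs)} \<in> F"
    using assms unfolding has_cycle_def by blast
  have len: "0 < length vs" "1 < length vs" "2 < length vs"
    using vs(1) by auto
  then have "{vs ! 0, vs ! 1} \<in> F" "{vs ! 1, vs ! 2} \<in> F"
    using vs(3)[rule_format, of 0] vs(3)[rule_format, of 1] by (simp_all add: numeral_2_eq_2)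
  moreover have "vs ! 0 \<noteq> vs ! 1" "vs ! 0 \<noteq> vs ! 2"
    using len vs(2) by (simp_all add: nth_eq_iff_index_eq)
  ultimately show thesis using that by blast
qed

lemma forest_singleton: "forest {e}"
  unfolding forest_def by (metis has_cycle_two_edges singletonD)

lemma arboricity_forest_cover:
  assumes "finite E"
  obtains Fs :: "nat \<Rightarrow> 'a set set"
  where "\<forall>i<arboricity E. forest (Fs i) \<and> Fs i \<subseteq> E" "E = (\<Union>i<arboricity E. Fs i)"
proof -
  obtain f where f: "bij_betw f {..<card E} E"
    using ex_bij_betw_nat_finite[OF assms] by (auto simp: atLeast0LessThan)
  have "\<forall>i<card E. forest {f i} \<and> {f i} \<subseteq> E"
    using bij_betwE[OF f] by (simp add: forest_singleton)
  moreover have "E = (\<Union>i<card E. {f i})"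
    using bij_betw_imp_surj_on[OF f] by auto
  ultimately have "\<exists>Fs :: nat \<Rightarrow> 'a set set.
      (\<forall>i<card E. forest (Fs i) \<and> Fs i \<subseteq> E) \<and> E = (\<Union>i<card E. Fs i)"
    by (intro exI[of _ "\<lambda>i. {f i}"] conjI)
  then have "\<exists>Fs :: nat \<Rightarrow> 'a set set.
      (\<forall>i<arboricity E. forest (Fs i) \<and> Fs i \<subseteq> E) \<and> E = (\<Union>i<arboricity E. Fs i)"
    unfolding arboricity_def by (rule LeastI)
  then show thesis
    using that by (elim exE conjE)
qed

lemma card_edges_within_le_arboricity:
  assumes "simple_graph E" "finite S"
  shows "card {e \<in> E. e \<subseteq> S} \<le> arboricity E * card S"
proof -
  have "finite E" using assms(1) unfolding simple_graph_def by blast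
  then obtain Fs where Fs: "\<forall>i<arboricity E. forest (Fs i) \<and> Fs i \<subseteq> E"
    "E = (\<Union>i<arboricity E. Fs i)"
    by (rule arboricity_forest_cover)
  have "card {e \<in> E. e \<subseteq> S} = card (\<Union>i<arboricity E. {e \<in> Fs i. e \<subseteq> S})"
    using Fs(2) by (intro arg_cong[where f = card]) blast
  also have "\<dots> \<le> (\<Sum>i<arboricity E. card {e \<in> Fs i. e \<subseteq> S})"
    by (rule card_UN_le) simp
  also have "\<dots> \<le> (\<Sum>i<arboricity E. card S)"
  proof (rule sum_mono)
    fix i assume "i \<in> {..<arboricity E}"
    then have "\<not> has_cycle (Fs i)" "Fs i \<subseteq> E"
      using Fs(1) unfolding forest_def by auto
    show "card {e \<in> Fs i. e \<subseteq> S} \<le> card S"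
    proof (rule card_acyclic_le_card_vertices)
      show "\<forall>e\<in>{e \<in> Fs i. e \<subseteq> S}. \<exists>u v. u \<noteq> v \<and> e = {u, v}"
        using assms(1) \<open>Fs i \<subseteq> E\<close> unfolding simple_graph_def by blast
      show "\<not> has_cycle {e \<in> Fs i. e \<subseteq> S}"
        using \<open>\<not> has_cycle (Fs i)\<close> has_cycle_mono by blast
    qed (use assms(2) in auto)
  qed
  finally show ?thesis by simp
qed

lemma card_filter_swap:
  assumes "finite A" "finite B"
  shows "(\<Sum>a\<in>A. card {b \<in> B. R a b}) = (\<Sum>b\<in>B. card {a \<in> A. R a b})"
  using sum.swap_restrict[OF assms, of "\<lambda>_ _. 1::nat" R] by simp

lemma mult_card_gt_le_sum:
  fixes f :: "'b \<Rightarrow> real"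
  assumes "finite A" "\<forall>x\<in>A. 0 \<le> f x"
  shows "\<tau> * card {x \<in> A. \<tau> < f x} \<le> (\<Sum>x\<in>A. f x)"
proof (cases "\<tau> \<le> 0")
  case True
  then have "\<tau> * card {x \<in> A. \<tau> < f x} \<le> 0"
    by (simp add: mult_nonpos_nonneg)
  moreover have "0 \<le> (\<Sum>x\<in>A. f x)"
    using assms(2) by (simp add: sum_nonneg)
  ultimately show ?thesis by linarith
next
  case False
  have "\<tau> * card {x \<in> A. \<tau> < f x} = (\<Sum>x\<in>{x \<in> A. \<tau> < f x}. \<tau>)"
    by simp
  also have "\<dots> \<le> (\<Sum>x\<in>{x \<in> A. \<tau> < f x}. f x)"
    by (rule sum_mono) simp
  also have "\<dots> \<le> (\<Sum>x\<in>A. f x)"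
    using assms by (intro sum_mono2) auto
  finally show ?thesis .
qed

lemma sum_vdeg_eq_two_card:
  assumes "simple_graph E"
  shows "(\<Sum>v\<in>\<Union>E. vdeg E v) = 2 * card E"
proof -
  have edges: "\<forall>e\<in>E. card e = 2"
    using assms unfolding simple_graph_def by auto
  have "finite (\<Union>E)" "finite E"
    using assms unfolding simple_graph_def by auto
  then have "(\<Sum>v\<in>\<Union>E. vdeg E v) = (\<Sum>e\<in>E. card {v \<in> \<Union>E. v \<in> e})"
    unfolding vdeg_def by (rule card_filter_swap[where R = "\<lambda>v e. v \<in> e"])
  also have "\<dots> = (\<Sum>e\<in>E. card e)"
    by (intro sum.cong refl arg_cong[where f = card]) blast
  finally show ?thesis
    using edges by simp
qed

lemma finite_triangles:
  assumes "simple_graph E"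
  shows "finite (triangles E)"
proof (rule finite_subset)
  show "triangles E \<subseteq> Pow (\<Union>E)"
  proof
    fix T assume T: "T \<in> triangles E"
    have "x \<in> \<Union>E" if "x \<in> T" for x
    proof -
      have "\<not> T \<subseteq> {x}"
        using T card_mono[of "{x}" T] unfolding triangles_def by auto
      then obtain y where "y \<in> T" "y \<noteq> x" by blast
      then show ?thesis
        using T \<open>x \<in> T\<close> unfolding triangles_def by blast
    qed
    then show "T \<in> Pow (\<Union>E)" by blast
  qed
  show "finite (Pow (\<Union>E))"
    using assms unfolding simple_graph_def by auto
qed

lemma sum_etri_le_three_card_triangles:
  assumes "simple_graph E"
  shows "(\<Sum>e\<in>E. etri E e) \<le> 3 * card (triangles E)"
proof -
  have "finite E" using assms unfolding simple_graph_def by blast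
  then have "(\<Sum>e\<in>E. etri E e) = (\<Sum>T\<in>triangles E. card {e \<in> E. e \<subseteq> T})"
    unfolding etri_def using finite_triangles[OF assms]
    by (rule card_filter_swap[where R = "\<lambda>e T. e \<subseteq> T"])
  also have "\<dots> \<le> (\<Sum>T\<in>triangles E. 3)"
  proof (rule sum_mono)
    fix T assume T: "T \<in> triangles E"
    then have "finite T" "card T = 3"
      unfolding triangles_def by (auto intro: card_ge_0_finite)
    have "card {e \<in> E. e \<subseteq> T} \<le> card {e. e \<subseteq> T \<and> card e = 2}"
      using assms \<open>finite T\<close> unfolding simple_graph_def by (intro card_mono) auto
    also have "\<dots> = 3"
      using \<open>finite T\<close> \<open>card T = 3\<close> by (simp add: n_subsets choose_two)
    finally show "card {e \<in> E. e \<subseteq> T} \<le> 3" .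
  qed
  finally show ?thesis by simp
qed

lemma card_edeg_gt_le:
  fixes \<tau> :: real
  assumes "simple_graph E" "0 < \<tau>"
  shows "card {e \<in> E. \<tau> < edeg E e} \<le> 2 * real (arboricity E) * card E / \<tau>"
proof -
  define S where "S = {v \<in> \<Union>E. \<tau> < vdeg E v}"
  have "finite (\<Union>E)"
    using assms(1) unfolding simple_graph_def by auto
  have "\<tau> * card S \<le> (\<Sum>v\<in>\<Union>E. real (vdeg E v))"
    unfolding S_def using \<open>finite (\<Union>E)\<close> by (intro mult_card_gt_le_sum) auto
  also have "\<dots> = 2 * card E"
    using sum_vdeg_eq_two_card[OF assms(1)] by (metis of_nat_sum)
  finally have S: "card S \<le> 2 * card E / \<tau>"
    using assms(2) by (simp add: field_simps)
  have "{e \<in> E. \<tau> < edeg E e} \<subseteq> {e \<in> E. e \<subseteq> S}"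
  proof safe
    fix e x assume e: "e \<in> E" "\<tau> < edeg E e" and "x \<in> e"
    obtain y where "e = {y, x}"
      using e(1) assms(1) \<open>x \<in> e\<close> unfolding simple_graph_def by (metis edge_other_end)
    then have "edeg E e \<le> vdeg E x"
      unfolding edeg_def by simp
    then show "x \<in> S"
      unfolding S_def using e \<open>x \<in> e\<close> by auto
  qed
  then have "card {e \<in> E. \<tau> < edeg E e} \<le> card {e \<in> E. e \<subseteq> S}"
    using assms(1) unfolding simple_graph_def by (intro card_mono) auto
  also have "\<dots> \<le> arboricity E * card S"
    using finite_subset[OF _ \<open>finite (\<Union>E)\<close>, of S] unfolding S_def
    by (intro card_edges_within_le_arboricity assms(1)) blast
  finally have "card {e \<in> E. \<tau> < edeg E e} \<le> real (arboricity E) * card S"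
    by (metis of_nat_le_iff of_nat_mult)
  also have "\<dots> \<le> arboricity E * (2 * card E / \<tau>)"
    using S by (intro mult_left_mono) auto
  finally show ?thesis by (simp add: algebra_simps)
qed

lemma card_etri_gt_le:
  fixes \<tau> :: real
  assumes "simple_graph E" "0 < \<tau>"
  shows "card {e \<in> E. \<tau> < etri E e} \<le> 3 * real (card (triangles E)) / \<tau>"
proof -
  have "finite E"
    using assms(1) unfolding simple_graph_def by auto
  then have "\<tau> * card {e \<in> E. \<tau> < etri E e} \<le> (\<Sum>e\<in>E. real (etri E e))"
    by (intro mult_card_gt_le_sum) auto
  also have "\<dots> \<le> 3 * card (triangles E)"
    using sum_etri_le_three_card_triangles[OF assms(1)] by (metis of_nat_le_iff of_nat_sum)
  finally show ?thesis
    using assms(2) by (simp add: field_simps)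
qed

lemma div_le_powr_two_thirds:
  fixes eps t g :: real
  assumes "0 < eps" "eps \<le> 1" "0 < t" "t powr (1/3) \<le> g"
  shows "eps * t / g \<le> (eps * t) powr (2/3)"
proof -
  define c where "c = t powr (1/3)"
  have "0 < c" using assms(3) c_def by simp
  have t: "t = c * c powr 2"
    unfolding c_def using assms(3) by (simp add: powr_powr flip: powr_add)
  have "c \<le> g" using assms(4) c_def by simp
  then have "eps * t / g \<le> eps * t / c"
    using assms(1,3) \<open>0 < c\<close> by (intro divide_left_mono mult_pos_pos) auto
  also have "\<dots> = eps * c powr 2"
    using \<open>0 < c\<close> by (subst t) simp
  also have "\<dots> \<le> eps powr (2/3) * c powr 2"
    using assms(1,2) powr_mono'[of "2/3" 1 eps] by (intro mult_right_mono) auto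
  also have "\<dots> = (eps * t) powr (2/3)"
    unfolding c_def using assms(1,3) by (simp add: powr_mult powr_powr)
  finally show ?thesis .
qed

lemma card_high_degree_edges_le:
  fixes eps tt \<gamma> :: real
  assumes "simple_graph E" "0 < eps" "0 < tt" "0 < \<gamma>" "real (arboricity E) \<le> \<gamma>"
  shows "card {e \<in> E. 8 * real (card E) * \<gamma>^2 / (eps * tt) < edeg E e} \<le> eps * tt / \<gamma>"
proof (cases "E = {}")
  case False
  define m where "m = real (card E)"
  have "0 < m"
    using False assms(1) unfolding m_def simple_graph_def by (simp add: card_gt_0_iff)
  have "card {e \<in> E. 8 * m * \<gamma>^2 / (eps * tt) < edeg E e}
      \<le> 2 * real (arboricity E) * m / (8 * m * \<gamma>^2 / (eps * tt))"
    unfolding m_def by (rule card_edeg_gt_le[OF assms(1)])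
      (use \<open>0 < m\<close> assms(2-4) in \<open>simp add: m_def\<close>)
  also have "\<dots> = arboricity E / \<gamma> * (eps * tt / (4 * \<gamma>))"
    using \<open>0 < m\<close> assms(2-4) by (simp add: field_simps power2_eq_square)
  also have "\<dots> \<le> eps * tt / (4 * \<gamma>)"
    using assms(2-5) by (intro mult_left_le_one_le) auto
  also have "\<dots> \<le> eps * tt / \<gamma>"
    using assms(2-4) by (simp add: field_simps)
  finally show ?thesis
    unfolding m_def .
qed (use assms(2-4) in simp)

lemma card_high_triangle_edges_le:
  fixes eps tt \<gamma> :: real
  assumes "simple_graph E" "0 < eps" "0 < \<gamma>" "real (card (triangles E)) / 4 \<le> tt"
  shows "card {e \<in> E. 12 * \<gamma> / eps < etri E e} \<le> eps * tt / \<gamma>"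
proof -
  have "card {e \<in> E. 12 * \<gamma> / eps < etri E e} \<le> 3 * real (card (triangles E)) / (12 * \<gamma> / eps)"
    by (rule card_etri_gt_le[OF assms(1)]) (use assms(2,3) in simp)
  also have "\<dots> \<le> eps * tt / \<gamma>"
    using assms(2-4) by (simp add: field_simps)
  finally show ?thesis .
qed

theorem claim3p4:
  fixes E :: "'a set set" and eps tt :: real and alpha_t :: nat
  assumes "simple_graph E"
    and "0 < eps" "eps < 1"
    and "0 < alpha_t"
    and "0 < tt"
    and "alpha_t > arboricity E"
    and "real (card (triangles E)) / 4 \<le> tt" "tt \<le> real (card (triangles E))"
  shows "let m = real (card E);
             \<gamma> = max (real alpha_t) (tt powr (1/3));
             \<tau>d = 8 * m * \<gamma>^2 / (eps * tt);
             \<tau>t = 12 * \<gamma> / eps;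
             Hd = {e \<in> E. real (edeg E e) > \<tau>d};
             Ht = {e \<in> E. real (etri E e) > \<tau>t}
         in real (card Hd) \<le> (eps * tt) powr (2/3) \<and> real (card Ht) \<le> (eps * tt) powr (2/3)"
proof -
  define \<gamma> where "\<gamma> = max (real alpha_t) (tt powr (1/3))"
  have \<gamma>: "tt powr (1/3) \<le> \<gamma>" "real (arboricity E) \<le> \<gamma>"
    using assms(6) unfolding \<gamma>_def by auto
  moreover have "0 < tt powr (1/3)"
    using assms(5) by simp
  ultimately have "0 < \<gamma>"
    by linarith
  have "eps * tt / \<gamma> \<le> (eps * tt) powr (2/3)"
    using assms(2,3,5) \<gamma>(1) by (intro div_le_powr_two_thirds) auto
  moreover note card_high_degree_edges_le[OF assms(1,2,5) \<open>0 < \<gamma>\<close> \<gamma>(2)]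
  moreover note card_high_triangle_edges_le[OF assms(1,2) \<open>0 < \<gamma>\<close> assms(7)]
  ultimately show ?thesis
    unfolding Let_def \<gamma>_def[symmetric] by linarith
qed

end
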